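(* Let $g$ be a Riemannian metric on $\mathbb{R}^D$ written as $g_x(u,u)=u^{\top}H(x)u$ with $\|H(x)-H(y)\|_{\mathcal{B}}\le L_H\|x-y\|_2$ for all $x,y$. Let $N\ge1$, $\gamma^{\mathrm{p}}\in\mathcal{C}^N_{\mathrm{p}}$, and $K_3^2:=\frac1N\sum_{n=0}^{N-1}\|\beta^{\mathrm{p}}(t_n)\|_2^2$. Then $$\left|\mathcal{E}^g(\gamma^{\mathrm{pl}})-\mathcal{E}^g_{\mathrm{tra},N}(\gamma^{\mathrm{p}})\right|\le\frac{L_HK_3^3}{4N^{1/2}}.$$
   Context: $t_n=n/N$, $h=1/N$; $\mathcal{C}^N_{\mathrm{p}}$ is the set of maps $\gamma^{\mathrm{p}}:\{t_0,\dots,t_N\}\to\mathbb{R}^D$; $\beta^{\mathrm{p}}(t_n)=(\gamma^{\mathrm{p}}(t_{n+1})-\gamma^{\mathrm{p}}(t_n))/h$; $\gamma^{\mathrm{pl}}(t_n+s)=(1-Ns)\gamma^{\mathrm{p}}(t_n)+Ns\gamma^{\mathrm{p}}(t_{n+1})$ for $0\le s\le h$ is the linear interpolation; $\mathcal{E}^g(\gamma)=\int_0^1 g_{\gamma(t)}(\dot\gamma,\dot\gamma)dt$; $\mathcal{E}^g_{\mathrm{tra},N}(\gamma^{\mathrm{p}})=\frac1N\sum_{n=0}^{N-1}g_{(\gamma^{\mathrm{p}}(t_n)+\gamma^{\mathrm{p}}(t_{n+1}))/2}(\beta^{\mathrm{p}}(t_n),\beta^{\mathrm{p}}(t_n))$.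 $\|\cdot\|_{\mathcal{B}}$ is the operator norm. *)

theory Defs
  imports "HOL-Analysis.Analysis"
begin

definition metric_g :: "(real^'n \<Rightarrow> real^'n^'n) \<Rightarrow> real^'n \<Rightarrow> real^'n \<Rightarrow> real^'n \<Rightarrow> real" where
  "metric_g H x u v = u \<bullet> (H x *v v)"

definition energy :: "(real^'n \<Rightarrow> real^'n^'n) \<Rightarrow> (real \<Rightarrow> real^'n) \<Rightarrow> real" where
  "energy H \<gamma> = integral {0..1}
     (\<lambda>t. metric_g H (\<gamma> t) (vector_derivative \<gamma> (at t)) (vector_derivative \<gamma> (at t)))"

text \<open>Discrete difference quotient beta^p(t_n) = (gamma^p(t_{n+1}) - gamma^p(t_n))/h, h = 1/N;
  discrete curves are indexed by n (meaning the value at t_n = n/N).\<close>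
definition beta_p :: "nat \<Rightarrow> (nat \<Rightarrow> real^'n) \<Rightarrow> nat \<Rightarrow> real^'n" where
  "beta_p N \<gamma>p n = real N *\<^sub>R (\<gamma>p (Suc n) - \<gamma>p n)"

definition pl_interp :: "nat \<Rightarrow> (nat \<Rightarrow> real^'n) \<Rightarrow> real \<Rightarrow> real^'n" where
  "pl_interp N \<gamma>p t =
     (let n = min (nat \<lfloor>t * real N\<rfloor>) (N - 1); s = t - real n / real N
      in (1 - real N * s) *\<^sub>R \<gamma>p n + (real N * s) *\<^sub>R \<gamma>p (Suc n))"

definition energy_tra :: "(real^'n \<Rightarrow> real^'n^'n) \<Rightarrow> nat \<Rightarrow> (nat \<Rightarrow> real^'n) \<Rightarrow> real" where
  "energy_tra H N \<gamma>p = (1 / real N) * (\<Sum>n<N.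
      metric_g H ((1/2) *\<^sub>R (\<gamma>p n + \<gamma>p (Suc n))) (beta_p N \<gamma>p n) (beta_p N \<gamma>p n))"

end

theory Submission
  imports Defs
begin

text \<open>On the \<open>n\<close>-th segment the interpolated curve is affine with velocity \<open>\<beta>\<^sub>n\<close>, so the
  energy integrand \<open>t \<mapsto> g\<^bsub>\<gamma>(t)\<^esub>(\<beta>\<^sub>n, \<beta>\<^sub>n)\<close> is Lipschitz with constant \<open>L\<^sub>H \<parallel>\<beta>\<^sub>n\<parallel>\<^sup>3\<close>, and the
  discrete energy evaluates it at the midpoint of the segment. The midpoint rule for an
  \<open>M\<close>-Lipschitz function on an interval of length \<open>h\<close> errs by at most \<open>M h\<^sup>2 / 4\<close>, so the total
  error is at most \<open>L\<^sub>H / (4 N\<^sup>2) \<Sum> \<parallel>\<beta>\<^sub>n\<parallel>\<^sup>3\<close>, and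
  \<open>\<Sum> \<parallel>\<beta>\<^sub>n\<parallel>\<^sup>3 \<le> (\<Sum> \<parallel>\<beta>\<^sub>n\<parallel>\<^sup>2) powr (3/2) = (N K\<^sub>3\<^sup>2) powr (3/2)\<close>.\<close>

lemma metric_g_base_point_lipschitz:
  fixes H :: "real^'n \<Rightarrow> real^'n^'n"
  assumes lip: "\<And>x y. onorm (\<lambda>u. (H x - H y) *v u) \<le> L * norm (x - y)"
  shows "\<bar>metric_g H p u v - metric_g H q u v\<bar> \<le> L * norm (p - q) * norm u * norm v"
proof -
  have "\<bar>metric_g H p u v - metric_g H q u v\<bar> = \<bar>u \<bullet> ((H p - H q) *v v)\<bar>"
    by (simp add: metric_g_def matrix_vector_mult_diff_rdistrib inner_diff_right)
  also have "\<dots> \<le> norm u * norm ((H p - H q) *v v)"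
    by (rule Cauchy_Schwarz_ineq2)
  also have "\<dots> \<le> norm u * (L * norm (p - q) * norm v)"
  proof (rule mult_left_mono)
    have "norm ((H p - H q) *v v) \<le> onorm (\<lambda>u. (H p - H q) *v u) * norm v"
      by (rule onorm[OF matrix_vector_mul_bounded_linear])
    also have "\<dots> \<le> L * norm (p - q) * norm v"
      by (rule mult_right_mono[OF lip]) simp
    finally show "norm ((H p - H q) *v v) \<le> L * norm (p - q) * norm v" .
  qed simp
  finally show ?thesis
    by (simp add: mult_ac)
qed

lemma onorm_lipschitz_constant_nonneg:
  fixes H :: "real^'n \<Rightarrow> real^'n^'n"
  assumes lip: "\<And>x y. onorm (\<lambda>u. (H x - H y) *v u) \<le> L * norm (x - y)"
  shows "L \<ge> 0"
proof -
  have "0 \<le> onorm (\<lambda>u. (H 1 - H 0) *v u)"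
    by (rule onorm_pos_le[OF matrix_vector_mul_bounded_linear])
  also have "\<dots> \<le> L * norm (1 :: real^'n)"
    using lip[of 1 0] by simp
  finally show ?thesis
    by (simp add: zero_le_mult_iff)
qed

lemma metric_g_along_line_lipschitz:
  fixes H :: "real^'n \<Rightarrow> real^'n^'n"
  assumes lip: "\<And>x y. onorm (\<lambda>u. (H x - H y) *v u) \<le> L * norm (x - y)"
  shows "(L * norm b ^ 3)-lipschitz_on S (\<lambda>t. metric_g H (x + (t - a) *\<^sub>R b) b b)"
proof (rule lipschitz_onI)
  show "0 \<le> L * norm b ^ 3"
    using onorm_lipschitz_constant_nonneg[OF lip] by simp
  fix t s
  have "(x + (t - a) *\<^sub>R b) - (x + (s - a) *\<^sub>R b) = (t - s) *\<^sub>R b"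
    by (simp add: algebra_simps)
  then show "dist (metric_g H (x + (t - a) *\<^sub>R b) b b) (metric_g H (x + (s - a) *\<^sub>R b) b b)
      \<le> L * norm b ^ 3 * dist t s"
    using metric_g_base_point_lipschitz[OF lip,
        where p = "x + (t - a) *\<^sub>R b" and q = "x + (s - a) *\<^sub>R b" and u = b and v = b]
    by (simp add: dist_real_def power3_eq_cube mult_ac)
qed

lemma has_integral_abs_minus_midpoint:
  fixes a b :: real
  assumes "a \<le> b"
  shows "((\<lambda>t. \<bar>t - (a + b) / 2\<bar>) has_integral (b - a)\<^sup>2 / 4) {a..b}"
proof -
  define m where "m = (a + b) / 2"
  have "((\<lambda>t. - (m - t)\<^sup>2 / 2) has_real_derivative m - t) (at t)" for t
    by (auto intro!: derivative_eq_intros simp: field_simps)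
  then have "((\<lambda>t. m - t) has_integral (m - a)\<^sup>2 / 2) {a..m}"
    using fundamental_theorem_of_calculus[of a m "\<lambda>t. - (m - t)\<^sup>2 / 2" "\<lambda>t. m - t"] assms
    by (simp add: m_def has_real_derivative_iff_has_vector_derivative has_vector_derivative_at_within)
  then have left: "((\<lambda>t. \<bar>t - m\<bar>) has_integral (m - a)\<^sup>2 / 2) {a..m}"
    by (rule has_integral_spike_finite[where S = "{}", rotated 2]) auto
  have "((\<lambda>t. (t - m)\<^sup>2 / 2) has_real_derivative t - m) (at t)" for t
    by (auto intro!: derivative_eq_intros)
  then have "((\<lambda>t. t - m) has_integral (b - m)\<^sup>2 / 2) {m..b}"
    using fundamental_theorem_of_calculus[of m b "\<lambda>t. (t - m)\<^sup>2 / 2" "\<lambda>t. t - m"] assms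
    by (simp add: m_def has_real_derivative_iff_has_vector_derivative has_vector_derivative_at_within)
  then have right: "((\<lambda>t. \<bar>t - m\<bar>) has_integral (b - m)\<^sup>2 / 2) {m..b}"
    by (rule has_integral_spike_finite[where S = "{}", rotated 2]) auto
  have "((\<lambda>t. \<bar>t - m\<bar>) has_integral (m - a)\<^sup>2 / 2 + (b - m)\<^sup>2 / 2) {a..b}"
    by (rule has_integral_combine[OF _ _ left right]) (use assms in \<open>auto simp: m_def\<close>)
  also have "(m - a)\<^sup>2 / 2 + (b - m)\<^sup>2 / 2 = (b - a)\<^sup>2 / 4"
    by (simp add: m_def field_simps power2_eq_square)
  finally show ?thesis
    by (simp add: m_def)
qed

lemma midpoint_rule_lipschitz:
  fixes f :: "real \<Rightarrow> real"
  assumes lip: "M-lipschitz_on {a..b} f" and "a \<le> b"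
  shows "f integrable_on {a..b}"
    and "\<bar>integral {a..b} f - (b - a) * f ((a + b) / 2)\<bar> \<le> M * (b - a)\<^sup>2 / 4"
proof -
  show int: "f integrable_on {a..b}"
    by (rule integrable_continuous_interval[OF lipschitz_on_continuous_on[OF lip]])
  define m where "m = (a + b) / 2"
  have m: "m \<in> {a..b}"
    using \<open>a \<le> b\<close> by (simp add: m_def)
  have abs_int: "((\<lambda>t. M * \<bar>t - m\<bar>) has_integral M * (b - a)\<^sup>2 / 4) {a..b}"
    using has_integral_mult_right[OF has_integral_abs_minus_midpoint[OF \<open>a \<le> b\<close>], of M]
    by (simp add: m_def)
  have "\<bar>integral {a..b} f - (b - a) * f m\<bar> = norm (integral {a..b} (\<lambda>t. f t - f m))"
    using \<open>a \<le> b\<close> by (simp add: integral_diff[OF int integrable_const_ivl])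
  also have "\<dots> \<le> integral {a..b} (\<lambda>t. M * \<bar>t - m\<bar>)"
  proof (rule Henstock_Kurzweil_Integration.integral_norm_bound_integral)
    show "(\<lambda>t. f t - f m) integrable_on {a..b}"
      using int by (intro integrable_diff) auto
    show "(\<lambda>t. M * \<bar>t - m\<bar>) integrable_on {a..b}"
      using abs_int by blast
    show "norm (f t - f m) \<le> M * \<bar>t - m\<bar>" if "t \<in> {a..b}" for t
      using lipschitz_onD[OF lip that m] by (simp add: dist_real_def)
  qed
  also have "\<dots> = M * (b - a)\<^sup>2 / 4"
    by (rule integral_unique[OF abs_int])
  finally show "\<bar>integral {a..b} f - (b - a) * f ((a + b) / 2)\<bar> \<le> M * (b - a)\<^sup>2 / 4"
    by (simp add: m_def)
qed

lemma has_integral_consecutive_intervals: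
  fixes f :: "real \<Rightarrow> 'a::banach"
  assumes "mono x" and "\<And>n. n < k \<Longrightarrow> (f has_integral J n) {x n..x (Suc n)}"
  shows "(f has_integral (\<Sum>n<k. J n)) {x 0..x k}"
  using assms(2)
proof (induction k)
  case 0
  show ?case
    by (simp add: has_integral_refl)
next
  case (Suc k)
  have "(f has_integral (\<Sum>n<k. J n)) {x 0..x k}" and "(f has_integral J k) {x k..x (Suc k)}"
    using Suc by simp_all
  then have "(f has_integral (\<Sum>n<k. J n) + J k) {x 0..x (Suc k)}"
    by (rule has_integral_combine[rotated 2]) (use \<open>mono x\<close> in \<open>auto simp: monoD\<close>)
  then show ?case
    by simp
qed

lemma pl_interp_on_segment:
  assumes "n < N" and "real n / real N < t" and "t < real (Suc n) / real N"
  shows "pl_interp N \<gamma>p t = \<gamma>p n + (t - real n / real N) *\<^sub>R beta_p N \<gamma>p n"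
proof -
  have "real N > 0"
    using \<open>n < N\<close> by simp
  then have "real n < t * real N" and "t * real N < real n + 1"
    using assms(2,3) by (simp_all add: field_simps)
  then have "\<lfloor>t * real N\<rfloor> = int n"
    by (simp add: floor_eq_iff)
  then have "min (nat \<lfloor>t * real N\<rfloor>) (N - 1) = n"
    using \<open>n < N\<close> by simp
  moreover have "(1 - real N * (t - real n / real N)) *\<^sub>R \<gamma>p n + (real N * (t - real n / real N)) *\<^sub>R \<gamma>p (Suc n)
      = \<gamma>p n + (t - real n / real N) *\<^sub>R (real N *\<^sub>R (\<gamma>p (Suc n) - \<gamma>p n))"
    by (simp add: algebra_simps)
  ultimately show ?thesis
    unfolding pl_interp_def Let_def beta_p_def by simp
qed

lemma pl_interp_has_vector_derivative:
  assumes "n < N" and "real n / real N < t" and "t < real (Suc n) / real N"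
  shows "(pl_interp N \<gamma>p has_vector_derivative beta_p N \<gamma>p n) (at t)"
proof -
  have "((\<lambda>s. \<gamma>p n + (s - real n / real N) *\<^sub>R beta_p N \<gamma>p n) has_vector_derivative beta_p N \<gamma>p n) (at t)"
    by (auto intro!: derivative_eq_intros)
  then show ?thesis
    by (rule has_vector_derivative_transform_within_open[of _ _ _ "{real n / real N<..<real (Suc n) / real N}"])
      (use assms in \<open>auto simp: pl_interp_on_segment[OF \<open>n < N\<close>]\<close>)
qed

lemma energy_pl_interp_eq_sum:
  fixes H :: "real^'n \<Rightarrow> real^'n^'n"
  assumes lip: "\<And>x y. onorm (\<lambda>u. (H x - H y) *v u) \<le> L * norm (x - y)" and "N \<ge> 1"
  shows "energy H (pl_interp N \<gamma>p) = (\<Sum>n<N. integral {real n / real N..real (Suc n) / real N}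
      (\<lambda>t. metric_g H (\<gamma>p n + (t - real n / real N) *\<^sub>R beta_p N \<gamma>p n) (beta_p N \<gamma>p n) (beta_p N \<gamma>p n)))"
    (is "_ = (\<Sum>n<N. integral {?a n..?a (Suc n)} (?g n))")
proof -
  let ?F = "\<lambda>t. metric_g H (pl_interp N \<gamma>p t) (vector_derivative (pl_interp N \<gamma>p) (at t))
      (vector_derivative (pl_interp N \<gamma>p) (at t))"
  have "(?F has_integral integral {?a n..?a (Suc n)} (?g n)) {?a n..?a (Suc n)}" if "n < N" for n
  proof (rule has_integral_spike_finite[of "{?a n, ?a (Suc n)}"])
    have "?a n \<le> ?a (Suc n)"
      by (simp add: divide_right_mono)
    then show "(?g n has_integral integral {?a n..?a (Suc n)} (?g n)) {?a n..?a (Suc n)}"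
      by (rule integrable_integral[OF midpoint_rule_lipschitz(1)[OF metric_g_along_line_lipschitz[OF lip]]])
    fix t
    assume "t \<in> {?a n..?a (Suc n)} - {?a n, ?a (Suc n)}"
    then have t: "?a n < t" "t < ?a (Suc n)"
      by auto
    show "?F t = ?g n t"
      using pl_interp_on_segment[OF \<open>n < N\<close> t, of \<gamma>p]
        vector_derivative_at[OF pl_interp_has_vector_derivative[OF \<open>n < N\<close> t, of \<gamma>p]]
      by simp
  qed simp
  then have "(?F has_integral (\<Sum>n<N. integral {?a n..?a (Suc n)} (?g n))) {?a 0..?a N}"
    by (intro has_integral_consecutive_intervals) (auto intro!: monoI divide_right_mono)
  then show ?thesis
    using \<open>N \<ge> 1\<close> unfolding energy_def by (simp add: integral_unique)
qed

lemma sum_power3_le_sum_power2_sqrt: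
  fixes f :: "nat \<Rightarrow> real"
  assumes "\<And>n. f n \<ge> 0"
  shows "(\<Sum>n\<in>A. f n ^ 3) \<le> (\<Sum>n\<in>A. f n ^ 2) * sqrt (\<Sum>n\<in>A. f n ^ 2)"
proof (cases "finite A")
  case True
  let ?S = "\<Sum>n\<in>A. f n ^ 2"
  have "f n ^ 3 \<le> f n ^ 2 * sqrt ?S" if "n \<in> A" for n
  proof -
    have "f n ^ 2 \<le> ?S"
      by (rule member_le_sum) (use True that in auto)
    then have "f n \<le> sqrt ?S"
      using assms real_le_rsqrt by blast
    then show ?thesis
      using mult_left_mono[of "f n" "sqrt ?S" "f n ^ 2"] by (simp add: power2_eq_square power3_eq_cube)
  qed
  then have "(\<Sum>n\<in>A. f n ^ 3) \<le> (\<Sum>n\<in>A. f n ^ 2 * sqrt ?S)"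
    by (rule sum_mono)
  then show ?thesis
    by (simp add: sum_distrib_right)
qed simp

lemma segment_energy_midpoint_error:
  fixes H :: "real^'n \<Rightarrow> real^'n^'n"
  assumes lip: "\<And>x y. onorm (\<lambda>u. (H x - H y) *v u) \<le> L * norm (x - y)" and "N \<ge> 1"
  shows "\<bar>integral {real n / real N..real (Suc n) / real N}
      (\<lambda>t. metric_g H (\<gamma>p n + (t - real n / real N) *\<^sub>R beta_p N \<gamma>p n) (beta_p N \<gamma>p n) (beta_p N \<gamma>p n))
    - metric_g H ((1/2) *\<^sub>R (\<gamma>p n + \<gamma>p (Suc n))) (beta_p N \<gamma>p n) (beta_p N \<gamma>p n) / real N\<bar>
    \<le> L * norm (beta_p N \<gamma>p n) ^ 3 / (4 * real N ^ 2)"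
proof -
  define a where "a = real n / real N"
  define b where "b = real (Suc n) / real N"
  define \<beta> where "\<beta> = beta_p N \<gamma>p n"
  let ?g = "\<lambda>t. metric_g H (\<gamma>p n + (t - a) *\<^sub>R \<beta>) \<beta> \<beta>"
  have N: "real N > 0"
    using \<open>N \<ge> 1\<close> by simp
  have "a \<le> b"
    by (simp add: a_def b_def divide_right_mono)
  then have "\<bar>integral {a..b} ?g - (b - a) * ?g ((a + b) / 2)\<bar> \<le> L * norm \<beta> ^ 3 * (b - a)\<^sup>2 / 4"
    by (rule midpoint_rule_lipschitz(2)[OF metric_g_along_line_lipschitz[OF lip]])
  moreover have "b - a = 1 / real N"
    using N by (simp add: a_def b_def field_simps)
  moreover have "\<gamma>p n + ((a + b) / 2 - a) *\<^sub>R \<beta> = (1/2) *\<^sub>R (\<gamma>p n + \<gamma>p (Suc n))"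
    using N by (simp add: a_def b_def \<beta>_def beta_p_def vec_eq_iff field_simps)
  ultimately show ?thesis
    unfolding a_def b_def \<beta>_def by (simp add: power2_eq_square mult_ac)
qed

lemma sqrt_mean_power3_div_sqrt:
  fixes S N :: real
  assumes "S \<ge> 0" and "N > 0"
  shows "sqrt (S / N) ^ 3 / sqrt N = S * sqrt S / N\<^sup>2"
proof -
  have S: "S * sqrt S = sqrt S ^ 3"
    using \<open>S \<ge> 0\<close> by (simp add: power3_eq_cube)
  have N2: "N\<^sup>2 = sqrt N ^ 4"
    using \<open>N > 0\<close> power_mult[of "sqrt N" 2 2] by simp
  have "sqrt N > 0"
    using \<open>N > 0\<close> by simp
  then show ?thesis
    unfolding S N2 real_sqrt_divide by (simp add: power_divide field_simps eval_nat_numeral)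
qed

theorem proposition7p8:
  fixes H :: "real^'n \<Rightarrow> real^'n^'n" and L_H :: real and N :: nat
    and \<gamma>p :: "nat \<Rightarrow> real^'n" and K3 :: real
  assumes sym: "\<And>x. transpose (H x) = H x"
    and posdef: "\<And>x u. u \<noteq> 0 \<Longrightarrow> u \<bullet> (H x *v u) > 0"
    and lip: "\<And>x y. onorm (\<lambda>u. (H x - H y) *v u) \<le> L_H * norm (x - y)"
    and N: "N \<ge> 1"
    and K3: "K3 = sqrt ((1 / real N) * (\<Sum>n<N. (norm (beta_p N \<gamma>p n))\<^sup>2))"
  shows "\<bar>energy H (pl_interp N \<gamma>p) - energy_tra H N \<gamma>p\<bar> \<le> L_H * K3 ^ 3 / (4 * sqrt (real N))"
proof -
  define \<beta> where "\<beta> n = beta_p N \<gamma>p n" for n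
  define S where "S = (\<Sum>n<N. norm (\<beta> n) ^ 2)"
  have "\<bar>energy H (pl_interp N \<gamma>p) - energy_tra H N \<gamma>p\<bar> \<le> (\<Sum>n<N. L_H * norm (\<beta> n) ^ 3 / (4 * real N ^ 2))"
    unfolding energy_pl_interp_eq_sum[OF lip N] energy_tra_def \<beta>_def
    by (rule order_trans[OF _ sum_mono[OF segment_energy_midpoint_error[OF lip N]]])
      (simp add: sum_divide_distrib sum_subtractf[symmetric] sum_abs)
  also have "\<dots> = L_H / (4 * real N ^ 2) * (\<Sum>n<N. norm (\<beta> n) ^ 3)"
    by (simp add: sum_distrib_left)
  also have "\<dots> \<le> L_H / (4 * real N ^ 2) * (S * sqrt S)"
    unfolding S_def using onorm_lipschitz_constant_nonneg[OF lip]
    by (intro mult_left_mono sum_power3_le_sum_power2_sqrt) auto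
  also have "\<dots> = L_H / 4 * (sqrt (S / real N) ^ 3 / sqrt (real N))"
    using N by (simp add: sqrt_mean_power3_div_sqrt S_def sum_nonneg)
  also have "\<dots> = L_H * K3 ^ 3 / (4 * sqrt (real N))"
    by (simp add: K3 S_def \<beta>_def)
  finally show ?thesis .
qed

end
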